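(* Assume (G2) from the context, let $M:=2c_Dc^2$ and let $\alpha_M\in(0,1/4)$ be such that $M g(r)\le g(\alpha_Mr)$ for all $r>0$. Let $y\in X$, $r>0$ and $0<\alpha<\alpha_M$. Then $$G_{U(y,r)}(x,y)\ge\tfrac12\,G(x,y)\qquad\text{for all }x\in U(y,2\alpha r).$$
   Context: $(X,\rho)$ is a separable metric space; $U(x,r)$ the open ball. For every open $U\subseteq X$ and $x\in X$ a finite Borel measure $\mu_x^U$ on $X$ is given with $\mu_x^U(U)=0$, $\mu_x^U(X)\le1$, and $\mu_x^U=\varepsilon_x$ (Dirac) if $x\notin U$. $G\colon X\times X\to(0,\infty]$ is Borel. For open $V$, $G_V(x,y):=G(x,y)-\int G(z,y)\,d\mu_x^V(z)$ for $x,y\in V$ and $G_V:=0$ outside $V\times V$. (G2): there are a strictly decreasing continuous $g\colon[0,\infty)\to(0,\infty]$ and $c,c_D,M_0\in[1,\infty)$, $\alpha_0\in(0,1)$ with $g(r/2)\le c_Dg(r)$, $M_0g(r)\le g(\alpha_0r)$ for all $r>0$ and $c^{-1}g(\rho(x,y))\le G(x,y)\le c\,g(\rho(x,y))$ for all $x,y$. *)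

theory Defs
  imports "HOL-Probability.Probability"
begin

text \<open>Green function of an open set V:
  G_V(x,y) = G(x,y) - integral of G(z,y) d mu_x^V(z) for x,y in V, and 0 otherwise.
  Values are taken in ereal (the difference may a priori be negative).\<close>
definition greenV ::
  "('a::metric_space set \<Rightarrow> 'a \<Rightarrow> 'a measure) \<Rightarrow> ('a \<Rightarrow> 'a \<Rightarrow> ennreal) \<Rightarrow> 'a set \<Rightarrow> 'a \<Rightarrow> 'a \<Rightarrow> ereal"
where
  "greenV \<mu> G V x y =
     (if x \<in> V \<and> y \<in> V
      then enn2ereal (G x y) - enn2ereal (\<integral>\<^sup>+ z. G z y \<partial>(\<mu> V x))
      else 0)"

end

theory Submission
  imports Defs
begin

text \<open>Since \<open>\<mu>\<^sub>x\<^sup>U\<close> lives on the complement of \<open>U = U(y,r)\<close>, where \<open>G(\<cdot>,y) \<le> c g(r)\<close>, and has mass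
  at most 1, the subtracted integral is at most \<open>c g(r)\<close>. On the other hand, for \<open>x\<close> close to
  \<open>y\<close> the doubling property and the choice of \<open>\<alpha>\<^sub>M\<close> give \<open>2c\<^sup>2 g(r) \<le> g(\<rho>(x,y)) \<le> c G(x,y)\<close>,
  so the integral is at most half of \<open>G(x,y)\<close>.\<close>

lemma nn_integral_le_bound_off_null_set:
  fixes f :: "'a \<Rightarrow> ennreal"
  assumes "U \<in> null_sets M"
    and "\<And>z. z \<in> space M \<Longrightarrow> z \<notin> U \<Longrightarrow> f z \<le> C"
    and "emeasure M (space M) \<le> 1"
  shows "(\<integral>\<^sup>+ z. f z \<partial>M) \<le> C"
proof -
  have "AE z in M. z \<notin> U"
    using assms(1) by (rule AE_I') auto
  then have "AE z in M. f z \<le> C"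
    using assms(2) by (auto elim: AE_mp)
  then have "(\<integral>\<^sup>+ z. f z \<partial>M) \<le> (\<integral>\<^sup>+ z. C \<partial>M)"
    by (rule nn_integral_mono_AE)
  also have "\<dots> = C * emeasure M (space M)"
    by simp
  also have "\<dots> \<le> C"
    using mult_left_mono[OF assms(3), of C] by simp
  finally show ?thesis .
qed

lemma doubling_scaled_le:
  fixes g :: "real \<Rightarrow> ennreal"
  assumes antimono: "\<And>s t. 0 \<le> s \<Longrightarrow> s \<le> t \<Longrightarrow> g t \<le> g s"
    and doubling: "\<And>t. t > 0 \<Longrightarrow> g (t / 2) \<le> ennreal cD * g t"
    and scaling: "\<And>t. t > 0 \<Longrightarrow> ennreal (K * cD) * g t \<le> g (\<beta> * t)"
    and "K \<ge> 0" "cD \<ge> 0" "r > 0" "0 \<le> d" "d \<le> \<beta> * (2 * r)"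
  shows "ennreal K * g r \<le> g d"
proof -
  have "ennreal K * g r \<le> ennreal K * (ennreal cD * g (2 * r))"
    using doubling[of "2 * r"] \<open>r > 0\<close> by (simp add: mult_left_mono)
  also have "\<dots> = ennreal (K * cD) * g (2 * r)"
    using assms(4,5) by (simp add: ennreal_mult mult.assoc)
  also have "\<dots> \<le> g (\<beta> * (2 * r))"
    using scaling[of "2 * r"] \<open>r > 0\<close> by simp
  also have "\<dots> \<le> g d"
    using antimono assms(7,8) by blast
  finally show ?thesis .
qed

lemma ennreal_inverse_mult_two_square:
  assumes "c > 0"
  shows "ennreal (1 / c) * (ennreal (2 * c\<^sup>2) * a) = 2 * (ennreal c * a)"
proof -
  have "ennreal (1 / c) * ennreal (2 * c\<^sup>2) = ennreal (2 * c)"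
    using assms by (simp add: ennreal_mult'[symmetric] power2_eq_square)
  also have "\<dots> = 2 * ennreal c"
    using assms by (simp add: ennreal_mult)
  finally show ?thesis
    by (metis mult.assoc)
qed

lemma enn2ereal_half_le_diff:
  fixes a b :: ennreal
  assumes "b < top" "2 * b \<le> a"
  shows "enn2ereal a / 2 \<le> enn2ereal a - enn2ereal b"
proof (cases "a = top")
  case True
  then show ?thesis using assms by (cases b) auto
next
  case False
  then obtain x where x: "a = ennreal x" "x \<ge> 0" by (cases a) auto
  obtain w where w: "b = ennreal w" "w \<ge> 0" using assms(1) by (cases b) auto
  have "2 * w \<le> x"
    using assms(2) x w by (metis ennreal_le_iff ennreal_mult'' ennreal_numeral mult_nonneg_nonneg
        zero_le_numeral)
  then show ?thesis using x w by (simp add: enn2ereal_ennreal)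
qed

lemma enn2ereal_half_le_diff_of_le:
  fixes a b B :: ennreal
  assumes "b \<le> B" "B < top" "2 * B \<le> a"
  shows "enn2ereal a / 2 \<le> enn2ereal a - enn2ereal b"
proof (rule enn2ereal_half_le_diff)
  show "b < top" using assms(1,2) by (rule order.strict_trans1)
  show "2 * b \<le> a" using assms(1,3) by (meson mult_left_mono order_trans zero_le)
qed

lemma upper_bound_off_ball:
  fixes G :: "'a::metric_space \<Rightarrow> 'a \<Rightarrow> ennreal" and g :: "real \<Rightarrow> ennreal"
  assumes antimono: "\<And>s t. 0 \<le> s \<Longrightarrow> s \<le> t \<Longrightarrow> g t \<le> g s"
    and G_upper: "\<And>x y. G x y \<le> ennreal c * g (dist x y)"
    and "r \<ge> 0" "z \<notin> ball y r"
  shows "G z y \<le> ennreal c * g r"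
proof -
  have "g (dist z y) \<le> g r"
    using antimono[of r "dist z y"] assms(3,4) by (simp add: dist_commute)
  then show ?thesis
    using G_upper[of z y] by (meson mult_left_mono order_trans zero_le)
qed

theorem lemma6p5:
  fixes \<mu> :: "'a::metric_space set \<Rightarrow> 'a \<Rightarrow> 'a measure"
    and G :: "'a \<Rightarrow> 'a \<Rightarrow> ennreal"
    and g :: "real \<Rightarrow> ennreal"
    and c cD M0 \<alpha>0 \<alpha>M \<alpha> r :: real
    and y :: 'a
  assumes separable: "\<exists>D::'a set. countable D \<and> closure D = UNIV"
    and mu_sets: "\<And>U x. open U \<Longrightarrow> sets (\<mu> U x) = sets borel"
    and mu_U: "\<And>U x. open U \<Longrightarrow> emeasure (\<mu> U x) U = 0"
    and mu_le1: "\<And>U x. open U \<Longrightarrow> emeasure (\<mu> U x) (space (\<mu> U x)) \<le> 1"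
    and mu_outside: "\<And>U x. open U \<Longrightarrow> x \<notin> U \<Longrightarrow> \<mu> U x = return borel x"
    and G_pos: "\<And>x y. G x y > 0"
    and G_borel: "(\<lambda>(x, y). G x y) \<in> borel_measurable (borel \<Otimes>\<^sub>M borel)"
    and g_pos: "\<And>t. t \<ge> 0 \<Longrightarrow> g t > 0"
    and g_cont: "continuous_on {0..} g"
    and g_decr: "\<And>s t. 0 \<le> s \<Longrightarrow> s < t \<Longrightarrow> g t < g s"
    and c_ge: "c \<ge> 1" and cD_ge: "cD \<ge> 1" and M0_ge: "M0 \<ge> 1"
    and \<alpha>0: "0 < \<alpha>0" "\<alpha>0 < 1"
    and doubling: "\<And>t. t > 0 \<Longrightarrow> g (t / 2) \<le> ennreal cD * g t"
    and M0_prop: "\<And>t. t > 0 \<Longrightarrow> ennreal M0 * g t \<le> g (\<alpha>0 * t)"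
    and G_lower: "\<And>x y. ennreal (1 / c) * g (dist x y) \<le> G x y"
    and G_upper: "\<And>x y. G x y \<le> ennreal c * g (dist x y)"
    and \<alpha>M: "0 < \<alpha>M" "\<alpha>M < 1 / 4"
    and \<alpha>M_prop: "\<And>t. t > 0 \<Longrightarrow> ennreal (2 * cD * c\<^sup>2) * g t \<le> g (\<alpha>M * t)"
    and r_pos: "r > 0"
    and \<alpha>: "0 < \<alpha>" "\<alpha> < \<alpha>M"
  shows "\<forall>x \<in> ball y (2 * \<alpha> * r). greenV \<mu> G (ball y r) x y \<ge> enn2ereal (G x y) / 2"
proof
  fix x assume "x \<in> ball y (2 * \<alpha> * r)"
  then have dist_xy: "dist x y < 2 * \<alpha> * r" by (simp add: dist_commute)
  moreover have "2 * \<alpha> * r < r" using \<alpha> \<alpha>M r_pos by simp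
  ultimately have "dist x y < r" by linarith
  then have in_ball: "x \<in> ball y r" "y \<in> ball y r"
    using r_pos by (simp_all add: dist_commute)
  have g_antimono: "\<And>s t. 0 \<le> s \<Longrightarrow> s \<le> t \<Longrightarrow> g t \<le> g s"
    using g_decr by (metis order.order_iff_strict order.strict_implies_order)
  let ?I = "\<integral>\<^sup>+ z. G z y \<partial>\<mu> (ball y r) x"
  have I_le: "?I \<le> ennreal c * g r"
  proof (rule nn_integral_le_bound_off_null_set)
    show "ball y r \<in> null_sets (\<mu> (ball y r) x)"
      using mu_U mu_sets by (auto simp: null_sets_def)
    show "G z y \<le> ennreal c * g r" if "z \<notin> ball y r" for z
      using g_antimono G_upper r_pos that by (auto intro: upper_bound_off_ball)
  qed (use mu_le1 in simp)
  have g_near: "ennreal (2 * c\<^sup>2) * g r \<le> g (dist x y)"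
  proof (rule doubling_scaled_le[where g = g and cD = cD and \<beta> = \<alpha>M, OF g_antimono doubling])
    show "ennreal (2 * c\<^sup>2 * cD) * g t \<le> g (\<alpha>M * t)" if "t > 0" for t
      using \<alpha>M_prop[OF that] by (simp add: mult_ac)
    have "\<alpha> * (2 * r) \<le> \<alpha>M * (2 * r)" using \<alpha> r_pos by simp
    then show "dist x y \<le> \<alpha>M * (2 * r)" using dist_xy by (simp add: mult_ac)
  qed (use cD_ge r_pos in simp_all)
  have "2 * (ennreal c * g r) = ennreal (1 / c) * (ennreal (2 * c\<^sup>2) * g r)"
    using c_ge by (simp add: ennreal_inverse_mult_two_square)
  also have "\<dots> \<le> ennreal (1 / c) * g (dist x y)"
    using g_near by (rule mult_left_mono) simp
  also have "\<dots> \<le> G x y"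
    by (rule G_lower)
  finally have "2 * (ennreal c * g r) \<le> G x y" .
  moreover have "g r < top"
    using g_decr[of 0 r] r_pos top_greatest[of "g 0"] by (blast intro: order.strict_trans2)
  ultimately show "greenV \<mu> G (ball y r) x y \<ge> enn2ereal (G x y) / 2"
    using enn2ereal_half_le_diff_of_le[OF I_le] in_ball
    by (simp add: greenV_def ennreal_mult_less_top)
qed

end
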